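(* Let $c\geq 2$ be an integer such that $c+1$ is a prime power, and let $m\geq c+1$ be any prime power. Then there exists a $q$-ary $c$-frameproof code of length $c+2$ and cardinality $\frac{c+2}{c}(q-1)^2$, where $q=cm+1$.
   Context: For $P\subseteq F^l$ over a finite alphabet $F$, $desc(P)=\{x\in F^l: \text{for every } i\in\{1,\ldots,l\} \text{ there is } y\in P \text{ with } x_i=y_i\}$. For an integer $c\geq 2$, a $c$-frameproof code of length $l$ is a subset $C\subseteq F^l$ with $desc(P)\cap C=P$ for every $P\subseteq C$ with $|P|\leq c$; it is $q$-ary if $|F|=q$. *)

theory Defs
  imports Main "HOL-Number_Theory.Prime_Powers"
begin

definition words :: "'a set \<Rightarrow> nat \<Rightarrow> 'a list set" where
  "words F l = {x. length x = l \<and> set x \<subseteq> F}"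

definition desc :: "'a set \<Rightarrow> nat \<Rightarrow> 'a list set \<Rightarrow> 'a list set" where
  "desc F l P = {x \<in> words F l. \<forall>i<l. \<exists>y\<in>P. x ! i = y ! i}"

definition frameproof :: "nat \<Rightarrow> 'a set \<Rightarrow> nat \<Rightarrow> 'a list set \<Rightarrow> bool" where
  "frameproof c F l C \<longleftrightarrow> C \<subseteq> words F l \<and>
     (\<forall>P. P \<subseteq> C \<and> card P \<le> c \<longrightarrow> desc F l P \<inter> C = P)"

end

theory Submission
  imports Defs "HOL-Number_Theory.Residues" "HOL-Algebra.Algebraic_Closure"
begin

text \<open>
  Over a field with \<open>n\<close> elements, fix \<open>k \<le> n\<close> distinct points \<open>t\<^sub>i\<close>; the \<open>n\<^sup>2\<close> words
  \<open>(a + b t\<^sub>1, \<dots>, a + b t\<^sub>k, b)\<close> pairwise agree in at most one coordinate, since two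
  coordinates determine \<open>(a, b)\<close>. Take such words \<open>W\<^sub>1\<close> over \<open>GF(c + 1)\<close> and \<open>W\<^sub>2\<close> over
  \<open>GF(m)\<close>, both of length \<open>c + 2\<close>, drop the zero word from \<open>W\<^sub>1\<close>, and combine \<open>u \<in> W\<^sub>1\<close>,
  \<open>v \<in> W\<^sub>2\<close> into the word with entries \<open>(u\<^sub>i, v\<^sub>i)\<close>, all entries with \<open>u\<^sub>i = 0\<close> collapsed
  to one symbol. This gives \<open>((c + 1)\<^sup>2 - 1) m\<^sup>2\<close> words over \<open>c m + 1\<close> symbols. Every
  codeword \<open>x\<close> has at least \<open>c + 1\<close> coordinates with \<open>u\<^sub>i \<noteq> 0\<close>, and a codeword agreeing
  with \<open>x\<close> in two of them is \<open>x\<close>; so if \<open>x\<close> descends from at most \<open>c\<close> codewords, one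
  of them supplies two such coordinates and equals \<open>x\<close>.

  The field with \<open>q = p\<^sup>e\<close> elements is the set of roots of \<open>X\<^sup>q - X\<close> in an algebraic
  closure of \<open>\<int>/p\<close>: these roots are closed under the field operations by the Frobenius
  identity \<open>(x + y)\<^sup>p = x\<^sup>p + y\<^sup>p\<close>, and all of them are simple.
\<close>

section \<open>Finite fields\<close>

lemma (in cring) binomial_expansion:
  assumes x: "x \<in> carrier R" and y: "y \<in> carrier R"
  shows "(x \<oplus> y) [^] n = (\<Oplus>k \<in> {..n}. [(n choose k)] \<cdot> (x [^] k \<otimes> y [^] (n - k)))"
proof (induction n)
  case 0
  then show ?case using x y by simp
next
  case (Suc n)
  define T where "T = (\<lambda>n k. [(n choose k)] \<cdot> (x [^] k \<otimes> y [^] (n - k)))"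
  define U where "U = (\<lambda>k. [(n choose k)] \<cdot> (x [^] Suc k \<otimes> y [^] (n - k)))"
  define V where "V = (\<lambda>k. [(n choose k)] \<cdot> (x [^] k \<otimes> y [^] (Suc n - k)))"
  have Tc: "T n k \<in> carrier R" for n k using x y by (simp add: T_def)
  have Uc: "U k \<in> carrier R" for k using x y by (simp add: U_def)
  have Vc: "V k \<in> carrier R" for k using x y by (simp add: V_def)
  have IH: "(x \<oplus> y) [^] n = (\<Oplus>k \<in> {..n}. T n k)" using Suc by (simp add: T_def)
  have "(x \<oplus> y) [^] Suc n = (\<Oplus>k \<in> {..n}. T n k) \<otimes> x \<oplus> (\<Oplus>k \<in> {..n}. T n k) \<otimes> y"
    using x y IH Tc by (simp add: r_distr)
  also have "(\<Oplus>k \<in> {..n}. T n k) \<otimes> x = (\<Oplus>k \<in> {..n}. U k)"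
    using x y Tc by (simp add: finsum_ldistr, intro finsum_cong')
      (auto simp: T_def U_def add_pow_ldistr add_pow_rdistr m_ac nat_pow_Suc)
  also have "(\<Oplus>k \<in> {..n}. T n k) \<otimes> y = (\<Oplus>k \<in> {..n}. V k)"
    using x y Tc by (simp add: finsum_ldistr, intro finsum_cong')
      (auto simp: T_def V_def add_pow_ldistr add_pow_rdistr m_ac Suc_diff_le nat_pow_Suc)
  also have "(\<Oplus>k \<in> {..n}. V k) = (\<Oplus>k \<in> {..Suc n}. V k)"
    using Vc x y by (simp add: V_def binomial_eq_0)
  also have "\<dots> = V 0 \<oplus> (\<Oplus>k \<in> {..n}. V (Suc k))"
    using Vc by (simp del: finsum_Suc add: finsum_Suc2 a_comm)
  also have "(\<Oplus>k \<in> {..n}. U k) \<oplus> (V 0 \<oplus> (\<Oplus>k \<in> {..n}. V (Suc k)))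
     = V 0 \<oplus> (\<Oplus>k \<in> {..n}. U k \<oplus> V (Suc k))"
    using Uc Vc by (simp add: finsum_addf a_ac)
  also have "(\<Oplus>k \<in> {..n}. U k \<oplus> V (Suc k)) = (\<Oplus>k \<in> {..n}. T (Suc n) (Suc k))"
    by (intro finsum_cong') (auto simp: T_def U_def V_def add.nat_pow_mult[symmetric] x y)
  also have "V 0 \<oplus> (\<Oplus>k \<in> {..n}. T (Suc n) (Suc k)) = (\<Oplus>k \<in> {..Suc n}. T (Suc n) k)"
    using Tc x y by (simp del: finsum_Suc add: finsum_Suc2 a_comm T_def V_def)
  finally show ?case by (simp add: T_def)
qed

lemma (in cring) add_pow_eq_zero_if_char_dvd:
  assumes "[(p::nat)] \<cdot> \<one> = \<zero>" "z \<in> carrier R" "p dvd k"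
  shows "[(k::nat)] \<cdot> z = \<zero>"
proof -
  obtain d where k: "k = p * d" using assms(3) by blast
  have "[p] \<cdot> z = \<zero>"
    using add_pow_ldistr[of \<one> z p] assms by simp
  then show ?thesis using add.nat_pow_pow[of z d p] assms k by (simp add: mult.commute)
qed

lemma (in cring) frobenius_add:
  assumes p: "Factorial_Ring.prime p" and char: "[(p::nat)] \<cdot> \<one> = \<zero>"
    and x: "x \<in> carrier R" and y: "y \<in> carrier R"
  shows "(x \<oplus> y) [^] p = x [^] p \<oplus> y [^] p"
proof -
  define T where "T = (\<lambda>k. [(p choose k)] \<cdot> (x [^] k \<otimes> y [^] (p - k)))"
  have Tc: "T k \<in> carrier R" for k using x y by (simp add: T_def)
  obtain p' where p': "p = Suc p'" using p by (cases p) auto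
  have inner_vanish: "T k = \<zero>" if "0 < k" "k < p" for k
  proof -
    have "p dvd (p choose k)" using that p by (intro dvd_choose_prime) auto
    then show ?thesis using add_pow_eq_zero_if_char_dvd[OF char] x y by (simp add: T_def)
  qed
  have "(x \<oplus> y) [^] p = (\<Oplus>k \<in> {..p}. T k)" using binomial_expansion[OF x y] by (simp add: T_def)
  also have "\<dots> = T p \<oplus> (\<Oplus>k \<in> {..p'}. T k)" using Tc p' by simp
  also have "(\<Oplus>k \<in> {..p'}. T k) = (\<Oplus>k \<in> {..p'}. if 0 = k then T k else \<zero>)"
    using inner_vanish p' Tc by (intro finsum_cong') auto
  also have "\<dots> = T 0" by (rule add.finprod_singleton) (use Tc in auto)
  finally show ?thesis using x y by (simp add: T_def a_comm)
qed

lemma (in cring) frobenius_power_add: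
  assumes p: "Factorial_Ring.prime p" and char: "[(p::nat)] \<cdot> \<one> = \<zero>"
    and x: "x \<in> carrier R" and y: "y \<in> carrier R"
  shows "(x \<oplus> y) [^] (p ^ e) = x [^] (p ^ e) \<oplus> y [^] (p ^ e)"
proof (induction e)
  case 0 then show ?case using x y by simp
next
  case (Suc e)
  have "(x \<oplus> y) [^] (p ^ Suc e) = ((x \<oplus> y) [^] (p ^ e)) [^] p"
    using x y by (simp add: nat_pow_pow mult.commute)
  also have "\<dots> = (x [^] (p ^ e)) [^] p \<oplus> (y [^] (p ^ e)) [^] p"
    using Suc frobenius_add[OF p char] x y by simp
  finally show ?case using x y by (simp add: nat_pow_pow mult.commute)
qed

primrec geo_sum :: "('a, 'b) ring_scheme \<Rightarrow> 'a \<Rightarrow> 'a \<Rightarrow> nat \<Rightarrow> 'a" where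
  "geo_sum R u v 0 = \<zero>\<^bsub>R\<^esub>"
| "geo_sum R u v (Suc n) = u [^]\<^bsub>R\<^esub> n \<oplus>\<^bsub>R\<^esub> v \<otimes>\<^bsub>R\<^esub> geo_sum R u v n"

lemma (in ring) geo_sum_closed:
  "u \<in> carrier R \<Longrightarrow> v \<in> carrier R \<Longrightarrow> geo_sum R u v n \<in> carrier R"
  by (induction n) auto

lemma (in cring) diff_times_geo_sum:
  assumes u: "u \<in> carrier R" and v: "v \<in> carrier R"
  shows "(u \<ominus> v) \<otimes> geo_sum R u v n = u [^] n \<ominus> v [^] n"
proof (induction n)
  case 0 then show ?case using u v by (simp add: a_minus_def r_neg)
next
  case (Suc n)
  have g: "geo_sum R u v n \<in> carrier R" using geo_sum_closed u v .
  have "(u \<ominus> v) \<otimes> geo_sum R u v (Suc n)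
      = (u \<ominus> v) \<otimes> u [^] n \<oplus> v \<otimes> ((u \<ominus> v) \<otimes> geo_sum R u v n)"
    using u v g by (simp add: r_distr m_lcomm)
  also have "\<dots> = (u \<ominus> v) \<otimes> u [^] n \<oplus> v \<otimes> (u [^] n \<ominus> v [^] n)" using Suc by simp
  also have "\<dots> = u [^] Suc n \<ominus> v [^] Suc n"
    using u v by (simp add: a_minus_def r_distr l_distr r_minus l_minus m_ac a_ac nat_pow_Suc2)
      (rule r_neg2, auto)
  finally show ?case .
qed

lemma (in ring_hom_ring) hom_geo_sum:
  assumes "u \<in> carrier R" "v \<in> carrier R"
  shows "h (geo_sum R u v n) = geo_sum S (h u) (h v) n"
  using assms by (induction n) (auto simp: R.geo_sum_closed hom_nat_pow)

lemma (in cring) geo_sum_diagonal: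
  assumes a: "a \<in> carrier R"
  shows "geo_sum R a a (Suc n) = [Suc n] \<cdot> (a [^] n)"
proof (induction n)
  case 0 then show ?case using a by simp
next
  case (Suc n)
  have "geo_sum R a a (Suc (Suc n)) = a [^] Suc n \<oplus> a \<otimes> ([Suc n] \<cdot> (a [^] n))"
    using Suc by simp
  also have "\<dots> = a [^] Suc n \<oplus> [Suc n] \<cdot> (a [^] Suc n)"
    by (simp only: add_pow_rdistr[OF a nat_pow_closed[OF a]] nat_pow_Suc2[OF a])
  also have "\<dots> = [Suc (Suc n)] \<cdot> (a [^] Suc n)"
    using a add.nat_pow_mult[of "a [^] Suc n" 1 "Suc n"] by simp
  finally show ?case .
qed

lemma (in ring_hom_ring) hom_add_pow_nat:
  "x \<in> carrier R \<Longrightarrow> h ([(k::nat)] \<cdot>\<^bsub>R\<^esub> x) = [k] \<cdot>\<^bsub>S\<^esub> h x"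
  by (induction k) auto

lemma residue_ring_char:
  assumes p: "Factorial_Ring.prime (p::nat)"
  shows "[p] \<cdot>\<^bsub>residue_ring (int p)\<^esub> \<one>\<^bsub>residue_ring (int p)\<^esub> = \<zero>\<^bsub>residue_ring (int p)\<^esub>"
proof -
  interpret Z: residues_prime p "residue_ring (int p)" by unfold_locales (use p in auto)
  have "[(k::nat)] \<cdot>\<^bsub>residue_ring (int p)\<^esub> \<one>\<^bsub>residue_ring (int p)\<^esub> = int k mod int p" for k
  proof (induction k)
    case 0 then show ?case by (simp add: Z.res_zero_eq)
  next
    case (Suc k) then show ?case
      by (simp add: Z.res_add_eq Z.res_one_eq) (metis add.commute mod_add_left_eq)
  qed
  from this[of p] show ?thesis by (simp add: Z.res_zero_eq)
qed

text \<open>The carrier type is the one of the closures built by \<open>field.alg_closure\<close>.\<close>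

lemma exists_algebraically_closed_char:
  assumes p: "Factorial_Ring.prime (p::nat)"
  shows "\<exists>L :: ((int list \<times> nat) multiset \<Rightarrow> int) ring.
           algebraically_closed L \<and> [p] \<cdot>\<^bsub>L\<^esub> \<one>\<^bsub>L\<^esub> = \<zero>\<^bsub>L\<^esub>"
proof -
  interpret Z: residues_prime p "residue_ring (int p)" by unfold_locales (use p in auto)
  define L where "L = Z.alg_closure"
  have cl: "algebraic_closure L (Z.indexed_const ` carrier (residue_ring (int p)))"
    and hom: "Z.indexed_const \<in> ring_hom (residue_ring (int p)) L"
    using Z.alg_closureE unfolding L_def by auto
  interpret L: algebraic_closure L "Z.indexed_const ` carrier (residue_ring (int p))" by (rule cl)
  interpret H: ring_hom_ring "residue_ring (int p)" L Z.indexed_const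
    using hom by (intro ring_hom_ringI2) (auto simp: Z.ring_axioms L.ring_axioms)
  have "[p] \<cdot>\<^bsub>L\<^esub> \<one>\<^bsub>L\<^esub> = Z.indexed_const ([p] \<cdot>\<^bsub>residue_ring (int p)\<^esub> \<one>\<^bsub>residue_ring (int p)\<^esub>)"
    by (simp add: H.hom_add_pow_nat)
  also have "\<dots> = \<zero>\<^bsub>L\<^esub>" using residue_ring_char[OF p] by simp
  finally show ?thesis using L.algebraically_closed_axioms by blast
qed

lemma (in domain) var_minus_poly_of_const:
  assumes a: "a \<in> carrier R"
  shows "X \<ominus>\<^bsub>poly_ring R\<^esub> poly_of_const a = [\<one>, \<ominus> a]"
proof (cases "a = \<zero>")
  case True
  interpret PR: domain "poly_ring R" by (rule univ_poly_is_domain[OF carrier_is_subring])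
  have "poly_of_const a = \<zero>\<^bsub>poly_ring R\<^esub>"
    using True by (simp add: poly_of_const_def univ_poly_zero)
  then show ?thesis
    using var_closed(1)[OF carrier_is_subring] True by (simp add: a_minus_def var_def)
next
  case False
  have "poly_of_const a \<in> carrier (poly_ring R)"
    using canonical_embedding_is_hom[OF carrier_is_subring] a by (auto simp: ring_hom_def)
  then have "[a] \<in> carrier (poly_ring R)" using False by (simp add: poly_of_const_def)
  then show ?thesis using a False
    by (simp add: a_minus_def univ_poly_a_inv_def'[OF carrier_is_subring] poly_of_const_def
        univ_poly_add var_def)
qed

lemma (in field) degree_var_pow_minus_var:
  assumes "2 \<le> (q::nat)"
  shows "degree (X [^]\<^bsub>poly_ring R\<^esub> q \<ominus>\<^bsub>poly_ring R\<^esub> X) = q"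
proof -
  interpret PR: domain "poly_ring R" by (rule univ_poly_is_domain[OF carrier_is_subring])
  have Xc: "X \<in> carrier (poly_ring R)" by (rule var_closed(1)[OF carrier_is_subring])
  have "X [^]\<^bsub>poly_ring R\<^esub> q = monom \<one> q"
    by (rule unitary_monom_eq_var_pow[OF carrier_is_subring, symmetric])
  then have d1: "degree (X [^]\<^bsub>poly_ring R\<^esub> q) = q" by (simp add: monom_def)
  have d2: "degree (\<ominus>\<^bsub>poly_ring R\<^esub> X) = 1"
    using univ_poly_a_inv_degree[OF carrier_is_subring Xc] by (simp add: var_def)
  have "polynomial (carrier R) (X [^]\<^bsub>poly_ring R\<^esub> q)"
    and "polynomial (carrier R) (\<ominus>\<^bsub>poly_ring R\<^esub> X)"
    unfolding univ_poly_carrier using Xc by simp_all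
  then show ?thesis
    unfolding a_minus_def univ_poly_add
    using poly_add_degree_eq[OF carrier_is_subring] d1 d2 assms by simp
qed

lemma (in field) eval_var_pow_minus_var:
  assumes x: "x \<in> carrier R"
  shows "eval (X [^]\<^bsub>poly_ring R\<^esub> (q::nat) \<ominus>\<^bsub>poly_ring R\<^esub> X) x = x [^] q \<ominus> x"
proof -
  interpret PR: domain "poly_ring R" by (rule univ_poly_is_domain[OF carrier_is_subring])
  interpret E: ring_hom_ring "poly_ring R" R "\<lambda>f. eval f x"
    by (rule eval_ring_hom[OF carrier_is_subring x])
  show ?thesis
    using var_closed(1)[OF carrier_is_subring] x
    by (simp add: a_minus_def E.hom_nat_pow E.hom_add E.hom_a_inv eval_var)
qed

lemma (in field) var_pow_minus_var_factor:
  assumes a: "a \<in> carrier R" and aq: "a [^] (q::nat) = a"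
  shows "X [^]\<^bsub>poly_ring R\<^esub> q \<ominus>\<^bsub>poly_ring R\<^esub> X = [\<one>, \<ominus> a] \<otimes>\<^bsub>poly_ring R\<^esub>
           (geo_sum (poly_ring R) X (poly_of_const a) q \<ominus>\<^bsub>poly_ring R\<^esub> \<one>\<^bsub>poly_ring R\<^esub>)"
proof -
  interpret PR: domain "poly_ring R" by (rule univ_poly_is_domain[OF carrier_is_subring])
  interpret C: ring_hom_ring "R \<lparr> carrier := carrier R \<rparr>" "poly_ring R" poly_of_const
    by (rule canonical_embedding_ring_hom[OF carrier_is_subring])
  have Xc: "X \<in> carrier (poly_ring R)" by (rule var_closed(1)[OF carrier_is_subring])
  define A where "A = poly_of_const a"
  define G where "G = geo_sum (poly_ring R) X A q"
  have Ac: "A \<in> carrier (poly_ring R)" unfolding A_def using a by simp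
  have Gc: "G \<in> carrier (poly_ring R)" unfolding G_def using PR.geo_sum_closed Xc Ac by blast
  have "A [^]\<^bsub>poly_ring R\<^esub> q = A"
    unfolding A_def using C.hom_nat_pow[of a q] a aq by simp
  then have tele: "(X \<ominus>\<^bsub>poly_ring R\<^esub> A) \<otimes>\<^bsub>poly_ring R\<^esub> G = X [^]\<^bsub>poly_ring R\<^esub> q \<ominus>\<^bsub>poly_ring R\<^esub> A"
    unfolding G_def using PR.diff_times_geo_sum[OF Xc Ac] by simp
  have "(X \<ominus>\<^bsub>poly_ring R\<^esub> A) \<otimes>\<^bsub>poly_ring R\<^esub> (G \<ominus>\<^bsub>poly_ring R\<^esub> \<one>\<^bsub>poly_ring R\<^esub>)
     = (X \<ominus>\<^bsub>poly_ring R\<^esub> A) \<otimes>\<^bsub>poly_ring R\<^esub> G \<ominus>\<^bsub>poly_ring R\<^esub> (X \<ominus>\<^bsub>poly_ring R\<^esub> A)"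
    using Xc Ac Gc by (simp add: PR.r_distr a_minus_def PR.r_minus)
  also have "\<dots> = X [^]\<^bsub>poly_ring R\<^esub> q \<ominus>\<^bsub>poly_ring R\<^esub> X"
    unfolding tele using Xc Ac by (simp add: a_minus_def PR.minus_add PR.a_ac PR.r_neg2)
  finally show ?thesis using var_minus_poly_of_const[OF a] unfolding A_def G_def by simp
qed

text \<open>If the characteristic divides \<open>q\<close>, the cofactor of \<open>X - a\<close> in \<open>X\<^sup>q - X\<close> takes the value
  \<open>q a\<^sup>q\<^sup>-\<^sup>1 - 1 = -1\<close> at \<open>a\<close>, so every root of \<open>X\<^sup>q - X\<close> is simple.\<close>

lemma (in field) count_roots_var_pow_minus_var:
  assumes q: "0 < (q::nat)" and char: "[q] \<cdot> \<one> = \<zero>"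
    and a: "a \<in> carrier R" and aq: "a [^] q = a"
  shows "count (roots (X [^]\<^bsub>poly_ring R\<^esub> q \<ominus>\<^bsub>poly_ring R\<^esub> X)) a = 1"
proof -
  interpret PR: domain "poly_ring R" by (rule univ_poly_is_domain[OF carrier_is_subring])
  interpret E: ring_hom_ring "poly_ring R" R "\<lambda>f. eval f a"
    by (rule eval_ring_hom[OF carrier_is_subring a])
  have Xc: "X \<in> carrier (poly_ring R)" by (rule var_closed(1)[OF carrier_is_subring])
  define A where "A = poly_of_const a"
  have Ac: "A \<in> carrier (poly_ring R)"
    unfolding A_def using canonical_embedding_is_hom[OF carrier_is_subring] a
    by (auto simp: ring_hom_def)
  define Q where "Q = geo_sum (poly_ring R) X A q \<ominus>\<^bsub>poly_ring R\<^esub> \<one>\<^bsub>poly_ring R\<^esub>"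
  have Gc: "geo_sum (poly_ring R) X A q \<in> carrier (poly_ring R)"
    using PR.geo_sum_closed Xc Ac by blast
  then have Qc: "Q \<in> carrier (poly_ring R)" unfolding Q_def by simp
  have "eval A a = a" unfolding A_def using a by (cases "a = \<zero>") (auto simp: poly_of_const_def)
  then have "eval (geo_sum (poly_ring R) X A q) a = geo_sum R a a q"
    using E.hom_geo_sum[OF Xc Ac, of q] eval_var[OF a] by simp
  also have "\<dots> = [q] \<cdot> (a [^] (q - 1))"
    using geo_sum_diagonal[OF a, of "q - 1"] q by simp
  also have "\<dots> = \<zero>"
    using add_pow_ldistr[of \<one> "a [^] (q - 1)" q] char a by simp
  finally have "eval Q a = \<ominus> \<one>"
    unfolding Q_def a_minus_def using Gc by (simp add: E.hom_add E.hom_a_inv)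
  moreover have "\<ominus> \<one> \<noteq> \<zero>"
    using one_not_zero by (metis add.inv_closed minus_minus minus_zero one_closed)
  ultimately have "Q \<noteq> []" and "\<not> is_root Q a"
    unfolding is_root_def by (metis eval.simps(1), simp)
  then have "roots (X [^]\<^bsub>poly_ring R\<^esub> q \<ominus>\<^bsub>poly_ring R\<^esub> X) = add_mset a (roots Q)"
    and "a \<notin># roots Q"
    unfolding var_pow_minus_var_factor[OF a aq] Q_def[symmetric, unfolded A_def]
    using poly_mult_degree_one_monic_imp_same_roots[OF a Qc] roots_mem_iff_is_root[OF Qc]
    by auto
  then show ?thesis by (simp add: not_in_iff)
qed

lemma (in algebraically_closed) card_fixed_points_pow:
  assumes q: "2 \<le> (q::nat)" and char: "[q] \<cdot> \<one> = \<zero>"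
  shows "card {x \<in> carrier L. x [^] q = x} = q"
proof -
  define P where "P = X [^]\<^bsub>poly_ring L\<^esub> q \<ominus>\<^bsub>poly_ring L\<^esub> X"
  have Pc: "P \<in> carrier (poly_ring L)"
  proof -
    interpret PR: domain "poly_ring L" by (rule univ_poly_is_domain[OF carrier_is_subring])
    show ?thesis unfolding P_def using var_closed(1)[OF carrier_is_subring] by simp
  qed
  have degP: "degree P = q" unfolding P_def by (rule degree_var_pow_minus_var[OF q])
  have set_roots: "set_mset (roots P) = {x \<in> carrier L. x [^] q = x}"
  proof -
    have "P \<noteq> []" using degP q by auto
    then have "x \<in># roots P \<longleftrightarrow> x \<in> carrier L \<and> eval P x = \<zero>" for x
      using roots_mem_iff_is_root[OF Pc, of x] unfolding is_root_def by simp
    moreover have "eval P x = \<zero> \<longleftrightarrow> x [^] q = x" if "x \<in> carrier L" for x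
      unfolding P_def using that by (simp add: eval_var_pow_minus_var r_right_minus_eq)
    ultimately show ?thesis by blast
  qed
  have "q = size (roots P)"
    using roots_over_carrier[OF Pc] degP unfolding splitted_def by simp
  also have "\<dots> = (\<Sum>x \<in> set_mset (roots P). count (roots P) x)"
    by (rule size_multiset_overloaded_eq)
  also have "\<dots> = (\<Sum>x \<in> {x \<in> carrier L. x [^] q = x}. 1)"
    using q char count_roots_var_pow_minus_var by (intro sum.cong[OF set_roots]) (auto simp: P_def)
  finally show ?thesis by simp
qed

lemma (in field) subfield_fixed_points_frobenius:
  assumes p: "Factorial_Ring.prime p" and char: "[(p::nat)] \<cdot> \<one> = \<zero>"
  shows "subfield {x \<in> carrier R. x [^] (p ^ e) = x} R"
proof -
  define S where "S = {x \<in> carrier R. x [^] (p ^ e) = x}"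
  have pe_pos: "p ^ e > 0" using p prime_gt_0_nat by simp
  have add: "x \<oplus> y \<in> S" if "x \<in> S" "y \<in> S" for x y
    using that frobenius_power_add[OF p char, of x y e] unfolding S_def by auto
  have mult: "x \<otimes> y \<in> S" if "x \<in> S" "y \<in> S" for x y
    using that nat_pow_distrib[of x y "p ^ e"] unfolding S_def by auto
  have minus_one: "\<ominus> \<one> \<in> S"
  proof -
    have "\<zero> = (\<ominus> \<one> \<oplus> \<one>) [^] (p ^ e)" using pe_pos by (simp add: l_neg nat_pow_zero)
    also have "\<dots> = (\<ominus> \<one>) [^] (p ^ e) \<oplus> \<one>"
      using frobenius_power_add[OF p char, of "\<ominus> \<one>" \<one> e] by simp
    finally have "(\<ominus> \<one>) [^] (p ^ e) = \<ominus> \<one>"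
      by (metis add.inv_closed minus_equality nat_pow_closed one_closed)
    then show ?thesis unfolding S_def by simp
  qed
  have neg: "\<ominus> x \<in> S" if "x \<in> S" for x
    using mult[OF minus_one that] l_minus[of \<one> x] that unfolding S_def by auto
  have inv: "inv x \<in> S" if x: "x \<in> S - {\<zero>}" for x
  proof -
    have xc: "x \<in> carrier R" and xq: "x [^] (p ^ e) = x" and x0: "x \<noteq> \<zero>"
      using x unfolding S_def by auto
    have ic: "inv x \<in> carrier R" using xc x0 by (simp add: field_Units)
    have "(inv x) [^] (p ^ e) \<otimes> x = (inv x \<otimes> x) [^] (p ^ e)"
      using xq xc ic by (simp add: nat_pow_distrib)
    also have "\<dots> = \<one>" using xc x0 by (simp add: field_Units)
    finally have "inv x = (inv x) [^] (p ^ e)"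
      using xc ic by (simp add: m_comm comm_inv_char)
    then show ?thesis using ic unfolding S_def by simp
  qed
  have "S \<subseteq> carrier R" and "\<one> \<in> S" unfolding S_def by auto
  then have "subring S R" using neg mult add by (intro subringI)
  then have "subfield S R" using inv by (intro subfieldI') auto
  then show ?thesis unfolding S_def .
qed

lemma finite_field_exists:
  assumes "primepow n"
  shows "\<exists>R :: ((int list \<times> nat) multiset \<Rightarrow> int) ring.
           field R \<and> finite (carrier R) \<and> card (carrier R) = n"
proof -
  obtain p e where p: "Factorial_Ring.prime p" and e: "e > 0" and n: "n = p ^ e"
    using assms unfolding primepow_def by auto
  obtain L :: "((int list \<times> nat) multiset \<Rightarrow> int) ring"
    where "algebraically_closed L" and char: "[p] \<cdot>\<^bsub>L\<^esub> \<one>\<^bsub>L\<^esub> = \<zero>\<^bsub>L\<^esub>"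
    using exists_algebraically_closed_char[OF p] by blast
  interpret algebraically_closed L by fact
  define S where "S = {x \<in> carrier L. x [^]\<^bsub>L\<^esub> n = x}"
  have "2 \<le> n" using n e prime_ge_2_nat[OF p] self_le_power[of p e] by linarith
  moreover have "[n] \<cdot>\<^bsub>L\<^esub> \<one>\<^bsub>L\<^esub> = \<zero>\<^bsub>L\<^esub>"
    using add_pow_eq_zero_if_char_dvd[OF char one_closed, of n] n e by simp
  ultimately have "card S = n" unfolding S_def by (rule card_fixed_points_pow)
  moreover have "field (L \<lparr> carrier := S \<rparr>)"
    using subfield_fixed_points_frobenius[OF p char] subfield_iff(2) unfolding S_def n by blast
  moreover have "finite S" using \<open>card S = n\<close> \<open>2 \<le> n\<close> card.infinite by fastforce
  ultimately show ?thesis by (intro exI[of _ "L \<lparr> carrier := S \<rparr>"]) simp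
qed

section \<open>Words that pairwise agree in at most one coordinate\<close>

definition agree_at_most_once :: "'a list set \<Rightarrow> bool" where
  "agree_at_most_once W \<longleftrightarrow> (\<forall>x\<in>W. \<forall>y\<in>W. \<forall>i j. i < length x \<longrightarrow> j < length x \<longrightarrow> i \<noteq> j \<longrightarrow>
     x ! i = y ! i \<longrightarrow> x ! j = y ! j \<longrightarrow> x = y)"

lemma agree_at_most_onceD:
  assumes "agree_at_most_once W" "x \<in> W" "y \<in> W"
    and "i < length x" "j < length x" "i \<noteq> j" "x ! i = y ! i" "x ! j = y ! j"
  shows "x = y"
  using assms unfolding agree_at_most_once_def by blast

lemma (in domain) affine_eq_at_two_points:
  assumes c: "a \<in> carrier R" "b \<in> carrier R" "a' \<in> carrier R" "b' \<in> carrier R"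
    "s \<in> carrier R" "s' \<in> carrier R"
    and ss: "s \<noteq> s'"
    and e1: "a \<oplus> b \<otimes> s = a' \<oplus> b' \<otimes> s" and e2: "a \<oplus> b \<otimes> s' = a' \<oplus> b' \<otimes> s'"
  shows "a = a' \<and> b = b'"
proof -
  have "(b \<ominus> b') \<otimes> (s \<ominus> s')
      = (a \<oplus> b \<otimes> s) \<ominus> (a \<oplus> b \<otimes> s') \<ominus> ((a' \<oplus> b' \<otimes> s) \<ominus> (a' \<oplus> b' \<otimes> s'))"
    using c by algebra
  also have "\<dots> = \<zero>" using e1 e2 c by (simp add: r_right_minus_eq)
  finally have "b \<ominus> b' = \<zero> \<or> s \<ominus> s' = \<zero>" using c by (simp add: integral_iff)
  then have b: "b = b'" using ss c by (simp add: r_right_minus_eq)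
  then show ?thesis using e1 c by simp
qed

definition affine_word :: "('a, 'b) ring_scheme \<Rightarrow> 'a list \<Rightarrow> 'a \<Rightarrow> 'a \<Rightarrow> 'a list" where
  "affine_word R ts a b = map (\<lambda>t. a \<oplus>\<^bsub>R\<^esub> b \<otimes>\<^bsub>R\<^esub> t) ts @ [b]"

lemma nth_affine_word:
  "i \<le> length ts \<Longrightarrow>
    affine_word R ts a b ! i = (if i < length ts then a \<oplus>\<^bsub>R\<^esub> b \<otimes>\<^bsub>R\<^esub> ts ! i else b)"
  unfolding affine_word_def by (simp add: nth_append)

lemma (in domain) affine_word_eq_at_two_coordinates:
  assumes ts: "distinct ts" "set ts \<subseteq> carrier R"
    and c: "a \<in> carrier R" "b \<in> carrier R" "a' \<in> carrier R" "b' \<in> carrier R"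
    and ij: "i \<le> length ts" "j \<le> length ts" "i < j"
    and e: "affine_word R ts a b ! i = affine_word R ts a' b' ! i"
      "affine_word R ts a b ! j = affine_word R ts a' b' ! j"
  shows "a = a' \<and> b = b'"
proof -
  have tc: "ts ! i \<in> carrier R" if "i < length ts" for i using that ts(2) nth_mem by blast
  show ?thesis
  proof (cases "j < length ts")
    case True
    have neq: "ts ! i \<noteq> ts ! j" using ts(1) ij True by (simp add: nth_eq_iff_index_eq)
    have "a \<oplus> b \<otimes> ts ! i = a' \<oplus> b' \<otimes> ts ! i" "a \<oplus> b \<otimes> ts ! j = a' \<oplus> b' \<otimes> ts ! j"
      using e ij True by (simp_all add: nth_affine_word)
    then show ?thesis using affine_eq_at_two_points[OF c tc tc neq] ij True by simp
  next
    case False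
    then have "b = b'" and "a \<oplus> b \<otimes> ts ! i = a' \<oplus> b \<otimes> ts ! i"
      using e ij by (simp_all add: nth_affine_word)
    then show ?thesis using c tc[of i] ij False by simp
  qed
qed

lemma (in domain) agree_at_most_once_affine_words:
  assumes ts: "distinct ts" "set ts \<subseteq> carrier R"
  shows "agree_at_most_once ((\<lambda>(a, b). affine_word R ts a b) ` (carrier R \<times> carrier R))"
  unfolding agree_at_most_once_def
proof (intro ballI allI impI)
  fix x y i j
  assume "x \<in> (\<lambda>(a, b). affine_word R ts a b) ` (carrier R \<times> carrier R)"
    and "y \<in> (\<lambda>(a, b). affine_word R ts a b) ` (carrier R \<times> carrier R)"
  then obtain a b a' b' where c: "a \<in> carrier R" "b \<in> carrier R" "a' \<in> carrier R" "b' \<in> carrier R"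
    and xy: "x = affine_word R ts a b" "y = affine_word R ts a' b'"
    by auto
  assume ij: "i < length x" "j < length x" "i \<noteq> j" and e: "x ! i = y ! i" "x ! j = y ! j"
  have "i \<le> length ts" "j \<le> length ts" using ij xy by (auto simp: affine_word_def)
  with ij(3) have "a = a' \<and> b = b'"
    using affine_word_eq_at_two_coordinates[OF ts c, of i j]
      affine_word_eq_at_two_coordinates[OF ts c, of j i] e unfolding xy
    by (cases "i < j") auto
  then show "x = y" using xy by simp
qed

lemma (in domain) inj_on_affine_word:
  assumes ts: "distinct ts" "set ts \<subseteq> carrier R" "ts \<noteq> []"
  shows "inj_on (\<lambda>(a, b). affine_word R ts a b) (carrier R \<times> carrier R)"
proof (rule inj_onI, clarify)
  fix a b a' b' assume c: "a \<in> carrier R" "b \<in> carrier R" "a' \<in> carrier R" "b' \<in> carrier R"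
    and "affine_word R ts a b = affine_word R ts a' b'"
  then show "a = a' \<and> b = b'"
    using affine_word_eq_at_two_coordinates[OF ts(1,2) c, of 0 "length ts"] ts(3) by simp
qed

lemma (in field) exists_agree_at_most_once_words:
  assumes fin: "finite (carrier R)" and k: "1 \<le> k" "k \<le> card (carrier R)"
  shows "\<exists>W \<subseteq> words (carrier R) (Suc k). card W = card (carrier R) ^ 2 \<and>
           agree_at_most_once W \<and> replicate (Suc k) \<zero> \<in> W"
proof -
  obtain us where us: "distinct us" "set us = carrier R"
    using finite_distinct_list[OF fin] by blast
  define ts where "ts = take k us"
  have "k \<le> length us" using distinct_card[OF us(1)] us(2) k by simp
  then have ts: "distinct ts" "set ts \<subseteq> carrier R" "length ts = k"
    unfolding ts_def using us set_take_subset[of k us] by auto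
  define W where "W = (\<lambda>(a, b). affine_word R ts a b) ` (carrier R \<times> carrier R)"
  have "ts \<noteq> []" using ts(3) k by auto
  then have "card W = card (carrier R) ^ 2"
    using inj_on_affine_word[OF ts(1,2)] unfolding W_def
    by (simp add: card_image card_cartesian_product power2_eq_square)
  moreover have "replicate (Suc k) \<zero> \<in> W"
  proof -
    have "map (\<lambda>t. \<zero> \<oplus> \<zero> \<otimes> t) ts = map (\<lambda>t. \<zero>) ts"
      using ts(2) by (intro map_cong) auto
    then have "affine_word R ts \<zero> \<zero> = replicate (Suc k) \<zero>"
      unfolding affine_word_def using ts(3) by (simp add: map_replicate_const replicate_append_same)
    then show ?thesis unfolding W_def by force
  qed
  moreover have "W \<subseteq> words (carrier R) (Suc k)"
    using ts(2,3) unfolding W_def words_def affine_word_def by fastforce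
  ultimately show ?thesis
    using agree_at_most_once_affine_words[OF ts(1,2)] unfolding W_def by blast
qed

section \<open>Frameproof codes\<close>

lemma mem_if_desc_separated:
  assumes x: "x \<in> desc F l P" and P: "finite P" "card P \<le> c"
    and I: "I \<subseteq> {..<l}" "c < card I"
    and sep: "\<And>y i j. y \<in> P \<Longrightarrow> i \<in> I \<Longrightarrow> j \<in> I \<Longrightarrow> i \<noteq> j \<Longrightarrow>
      y ! i = x ! i \<Longrightarrow> y ! j = x ! j \<Longrightarrow> y = x"
  shows "x \<in> P"
proof (rule ccontr)
  assume "x \<notin> P"
  define g where "g i = (SOME y. y \<in> P \<and> y ! i = x ! i)" for i
  have g: "g i \<in> P \<and> g i ! i = x ! i" if "i < l" for i
  proof -
    have "\<exists>y. y \<in> P \<and> y ! i = x ! i" using x that unfolding desc_def by force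
    then show ?thesis unfolding g_def by (rule someI_ex)
  qed
  have "inj_on g I"
  proof (rule inj_onI, rule ccontr)
    fix i j assume ij: "i \<in> I" "j \<in> I" "g i = g j" "i \<noteq> j"
    then have "i < l" "j < l" using I(1) by auto
    then have "g i = x" using sep g ij by metis
    then show False using g \<open>i < l\<close> \<open>x \<notin> P\<close> by metis
  qed
  moreover have "g ` I \<subseteq> P" using g I(1) by auto
  ultimately have "card I \<le> card P" using card_inj_on_le P(1) by blast
  then show False using I(2) P(2) by simp
qed

lemma frameproofI:
  assumes C: "C \<subseteq> words F l" "finite C"
    and separated: "\<And>x. x \<in> C \<Longrightarrow> \<exists>I \<subseteq> {..<l}. c < card I \<and>
       (\<forall>y\<in>C. \<forall>i\<in>I. \<forall>j\<in>I. i \<noteq> j \<longrightarrow> y ! i = x ! i \<longrightarrow> y ! j = x ! j \<longrightarrow> y = x)"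
  shows "frameproof c F l C"
  unfolding frameproof_def
proof (intro conjI allI impI)
  show "C \<subseteq> words F l" by (rule C(1))
  fix P assume P: "P \<subseteq> C \<and> card P \<le> c"
  show "desc F l P \<inter> C = P"
  proof
    show "P \<subseteq> desc F l P \<inter> C" using P C(1) unfolding desc_def by blast
    show "desc F l P \<inter> C \<subseteq> P"
    proof
      fix x assume x: "x \<in> desc F l P \<inter> C"
      then obtain I where "I \<subseteq> {..<l}" "c < card I" and
        "\<forall>y\<in>C. \<forall>i\<in>I. \<forall>j\<in>I. i \<noteq> j \<longrightarrow> y ! i = x ! i \<longrightarrow> y ! j = x ! j \<longrightarrow> y = x"
        using separated by blast
      moreover have "finite P" using P C(2) finite_subset by blast
      ultimately show "x \<in> P" using mem_if_desc_separated[of x F l P c I] x P by blast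
    qed
  qed
qed

lemma desc_map_inj_on:
  assumes f: "inj_on f F" and P: "P \<subseteq> words F l" and x: "x \<in> words F l"
    and desc: "map f x \<in> desc (f ` F) l (map f ` P)"
  shows "x \<in> desc F l P"
  unfolding desc_def
proof (intro CollectI conjI allI impI)
  show "x \<in> words F l" by (rule x)
  fix i assume i: "i < l"
  then obtain y where y: "y \<in> P" "map f x ! i = map f y ! i"
    using desc unfolding desc_def by auto
  have "y \<in> words F l" using y(1) P by blast
  then have "length x = l" "length y = l" "x ! i \<in> F" "y ! i \<in> F"
    using x i nth_mem unfolding words_def by auto
  then have "x ! i = y ! i" using y(2) i inj_onD[OF f] by simp
  then show "\<exists>y\<in>P. x ! i = y ! i" using y(1) by blast
qed

lemma frameproof_map:
  assumes fp: "frameproof c F l C" and f: "inj_on f F"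
  shows "frameproof c (f ` F) l (map f ` C)" and "card (map f ` C) = card C"
proof -
  have CW: "C \<subseteq> words F l" using fp unfolding frameproof_def by blast
  have inj: "inj_on (map f) C"
  proof (rule inj_onI)
    fix x y assume "x \<in> C" "y \<in> C" "map f x = map f y"
    moreover have "set x \<union> set y \<subseteq> F"
      using \<open>x \<in> C\<close> \<open>y \<in> C\<close> CW unfolding words_def by blast
    then have "inj_on f (set x \<union> set y)" by (rule inj_on_subset[OF f])
    ultimately show "x = y" using inj_on_map_eq_map by blast
  qed
  then show "card (map f ` C) = card C" by (rule card_image)
  show "frameproof c (f ` F) l (map f ` C)"
    unfolding frameproof_def
  proof (intro conjI allI impI)
    show "map f ` C \<subseteq> words (f ` F) l" using CW unfolding words_def by fastforce
    fix P' assume P': "P' \<subseteq> map f ` C \<and> card P' \<le> c"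
    define P where "P = C \<inter> map f -` P'"
    have P'_eq: "P' = map f ` P" unfolding P_def using P' by blast
    have "card P = card P'"
      unfolding P'_eq using inj P_def by (simp add: card_image inj_on_subset)
    then have descP: "desc F l P \<inter> C = P"
      using fp P' unfolding frameproof_def P_def by auto
    show "desc (f ` F) l P' \<inter> map f ` C = P'"
    proof
      show "P' \<subseteq> desc (f ` F) l P' \<inter> map f ` C"
        using P' CW unfolding desc_def words_def by fastforce
      show "desc (f ` F) l P' \<inter> map f ` C \<subseteq> P'"
      proof
        fix x' assume x': "x' \<in> desc (f ` F) l P' \<inter> map f ` C"
        then obtain x where x: "x \<in> C" "x' = map f x" by auto
        have "x \<in> desc F l P"
          using desc_map_inj_on[OF f _ _ x'[THEN IntD1, unfolded x(2) P'_eq]] x(1) CW P_def by blast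
        then show "x' \<in> P'" using descP x P'_eq by blast
      qed
    qed
  qed
qed

lemma finite_words: "finite F \<Longrightarrow> finite (words F l)"
  using finite_lists_length_eq[of F l] unfolding words_def by (simp add: conj_commute)

lemma card_entries_ne_ge:
  assumes W: "agree_at_most_once W" "replicate l z \<in> W"
    and u: "u \<in> W" "u \<noteq> replicate l z" "length u = l"
  shows "l - 1 \<le> card {i. i < l \<and> u ! i \<noteq> z}"
proof -
  define Z where "Z = {i. i < l \<and> u ! i = z}"
  define N where "N = {i. i < l \<and> u ! i \<noteq> z}"
  have "i = j" if "i \<in> Z" "j \<in> Z" for i j
  proof (rule ccontr)
    assume "i \<noteq> j"
    then have "u = replicate l z"
      using that u(3) by (intro agree_at_most_onceD[OF W(1) u(1) W(2)]) (auto simp: Z_def)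
    then show False using u(2) by simp
  qed
  moreover have "finite Z" unfolding Z_def by simp
  ultimately have "card Z \<le> 1" using card_le_Suc0_iff_eq[of Z] by auto
  moreover have "Z \<union> N = {..<l}" "Z \<inter> N = {}" unfolding Z_def N_def by auto
  then have "card Z + card N = l"
    using card_Un_disjoint[of Z N] by (simp add: Z_def N_def)
  ultimately show ?thesis unfolding N_def by linarith
qed

definition mask_word :: "'a \<Rightarrow> 'a list \<Rightarrow> 'b list \<Rightarrow> ('a \<times> 'b) option list" where
  "mask_word z u v = map2 (\<lambda>s t. if s = z then None else Some (s, t)) u v"

lemma mask_word_eq_at_two_coordinates:
  assumes W1: "W1 \<subseteq> words A l" "agree_at_most_once W1"
    and W2: "W2 \<subseteq> words B l" "agree_at_most_once W2"
    and uv: "u \<in> W1" "u' \<in> W1" "v \<in> W2" "v' \<in> W2"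
    and ij: "i < l" "j < l" "i \<noteq> j" "u ! i \<noteq> z" "u ! j \<noteq> z"
    and e: "mask_word z u' v' ! i = mask_word z u v ! i" "mask_word z u' v' ! j = mask_word z u v ! j"
  shows "u' = u \<and> v' = v"
proof -
  have len: "length u = l" "length u' = l" "length v = l" "length v' = l"
    using uv W1(1) W2(1) unfolding words_def by auto
  then have "u ! i = u' ! i \<and> v ! i = v' ! i" "u ! j = u' ! j \<and> v ! j = v' ! j"
    using e ij unfolding mask_word_def by (auto split: if_splits)
  then show ?thesis
    using agree_at_most_onceD[OF W1(2) uv(1,2)] agree_at_most_onceD[OF W2(2) uv(3,4)] ij(1-3) len
    by metis
qed

lemma mask_word_in_words:
  assumes "u \<in> words A l" "v \<in> words B l"
  shows "mask_word z u v \<in> words (insert None (Some ` ((A - {z}) \<times> B))) l"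
proof -
  have len: "length u = l" "length v = l" and "set u \<subseteq> A" "set v \<subseteq> B"
    using assms unfolding words_def by auto
  have "u ! i \<in> A" "v ! i \<in> B" if "i < l" for i
    using that len nth_mem[of i u] nth_mem[of i v] \<open>set u \<subseteq> A\<close> \<open>set v \<subseteq> B\<close> by auto
  then have "mask_word z u v ! i \<in> insert None (Some ` ((A - {z}) \<times> B))" if "i < l" for i
    using that len unfolding mask_word_def by auto
  moreover have "length (mask_word z u v) = l" using len by (simp add: mask_word_def)
  ultimately show ?thesis unfolding words_def by (auto simp: set_conv_nth)
qed

lemma frameproof_mask_words:
  assumes W1: "W1 \<subseteq> words A l" "agree_at_most_once W1" "replicate l z \<in> W1"
    and W2: "W2 \<subseteq> words B l" "agree_at_most_once W2"
    and fin: "finite A" "finite B" and l: "c + 2 \<le> l"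
  shows "frameproof c (insert None (Some ` ((A - {z}) \<times> B))) l
           ((\<lambda>(u, v). mask_word z u v) ` ((W1 - {replicate l z}) \<times> W2))"
    (is "frameproof c ?F l ?C")
proof (rule frameproofI)
  show "?C \<subseteq> words ?F l"
  proof
    fix x assume "x \<in> ?C"
    then obtain u v where "u \<in> W1" "v \<in> W2" "x = mask_word z u v" by auto
    moreover have "u \<in> words A l" "v \<in> words B l" using calculation W1(1) W2(1) by auto
    ultimately show "x \<in> words ?F l" using mask_word_in_words by simp
  qed
  show "finite ?C"
    using finite_subset[OF W1(1) finite_words[OF fin(1)]] finite_subset[OF W2(1) finite_words[OF fin(2)]]
    by simp
  fix x assume "x \<in> ?C"
  then obtain u v where uv: "u \<in> W1" "u \<noteq> replicate l z" "v \<in> W2" and x: "x = mask_word z u v"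
    by auto
  define I where "I = {i. i < l \<and> u ! i \<noteq> z}"
  have "length u = l" using uv(1) W1(1) by (auto simp: words_def)
  then have "l - 1 \<le> card I" unfolding I_def by (rule card_entries_ne_ge[OF W1(2,3) uv(1,2)])
  then have "c < card I" using l by linarith
  moreover have "y = x" if "y \<in> ?C" "i \<in> I" "j \<in> I" "i \<noteq> j" "y ! i = x ! i" "y ! j = x ! j"
    for y i j
  proof -
    obtain u' v' where "u' \<in> W1" "v' \<in> W2" "y = mask_word z u' v'" using \<open>y \<in> ?C\<close> by auto
    then show ?thesis
      using mask_word_eq_at_two_coordinates[OF W1(1,2) W2 uv(1) _ uv(3), of u' v' i j z] that(2-6)
      unfolding I_def x by auto
  qed
  moreover have "I \<subseteq> {..<l}" unfolding I_def by auto
  ultimately show "\<exists>I \<subseteq> {..<l}. c < card I \<and>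
       (\<forall>y\<in>?C. \<forall>i\<in>I. \<forall>j\<in>I. i \<noteq> j \<longrightarrow> y ! i = x ! i \<longrightarrow> y ! j = x ! j \<longrightarrow> y = x)"
    by blast
qed

lemma card_mask_words:
  assumes W1: "W1 \<subseteq> words A l" "agree_at_most_once W1" "replicate l z \<in> W1"
    and W2: "W2 \<subseteq> words B l" "agree_at_most_once W2"
    and fin: "finite W1" "finite W2" and l: "3 \<le> l"
  shows "card ((\<lambda>(u, v). mask_word z u v) ` ((W1 - {replicate l z}) \<times> W2)) = (card W1 - 1) * card W2"
proof -
  have eq: "u' = u \<and> v' = v"
    if uv: "u \<in> W1" "u \<noteq> replicate l z" "v \<in> W2" "u' \<in> W1" "v' \<in> W2"
      and e: "mask_word z u' v' = mask_word z u v" for u v u' v'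
  proof -
    define I where "I = {i. i < l \<and> u ! i \<noteq> z}"
    have "length u = l" using uv(1) W1(1) by (auto simp: words_def)
    then have "l - 1 \<le> card I" unfolding I_def by (rule card_entries_ne_ge[OF W1(2,3) uv(1,2)])
    then have "\<not> card I \<le> Suc 0" using l by linarith
    then obtain i j where "i \<in> I" "j \<in> I" "i \<noteq> j"
      using card_le_Suc0_iff_eq[of I] unfolding I_def by auto
    then show ?thesis
      using mask_word_eq_at_two_coordinates[OF W1(1,2) W2 uv(1,4,3,5), of i j z] e
      unfolding I_def by auto
  qed
  have "inj_on (\<lambda>(u, v). mask_word z u v) ((W1 - {replicate l z}) \<times> W2)"
    by (rule inj_onI) (use eq in auto)
  then show ?thesis using W1(3) fin by (simp add: card_image card_cartesian_product)
qed

lemma exists_frameproof_masked_product: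
  assumes W1: "W1 \<subseteq> words A l" "agree_at_most_once W1" "replicate l z \<in> W1" "z \<in> A"
    and W2: "W2 \<subseteq> words B l" "agree_at_most_once W2"
    and fin: "finite A" "finite B" and c: "0 < c" "c + 2 \<le> l"
  shows "\<exists>C. frameproof c {0..<(card A - 1) * card B + 1} l C \<and> card C = (card W1 - 1) * card W2"
proof -
  define F where "F = insert None (Some ` ((A - {z}) \<times> B))"
  define C where "C = (\<lambda>(u, v). mask_word z u v) ` ((W1 - {replicate l z}) \<times> W2)"
  have "frameproof c F l C"
    unfolding F_def C_def using frameproof_mask_words[OF W1(1-3) W2 fin c(2)] .
  moreover have "card C = (card W1 - 1) * card W2"
    unfolding C_def using card_mask_words[OF W1(1-3) W2] c
      finite_subset[OF W1(1) finite_words[OF fin(1)]] finite_subset[OF W2(1) finite_words[OF fin(2)]]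
    by simp
  moreover have "finite F" "card F = (card A - 1) * card B + 1"
    unfolding F_def using fin W1(4) by (simp_all add: card_image card_cartesian_product)
  moreover obtain f where "bij_betw f F {0..<card F}" using ex_bij_betw_finite_nat[OF \<open>finite F\<close>] by blast
  ultimately show ?thesis using frameproof_map[of c F l C f] by (auto simp: bij_betw_def)
qed

theorem corollary2:
  fixes c m :: nat
  assumes "c \<ge> 2" and "primepow (c + 1)"
    and "primepow m" and "m \<ge> c + 1"
  shows "\<exists>(F :: nat set) C. finite F \<and> card F = c * m + 1 \<and>
           frameproof c F (c + 2) C \<and>
           real (card C) = (real c + 2) / real c * (real (c * m + 1) - 1) ^ 2"
proof -
  obtain R1 :: "((int list \<times> nat) multiset \<Rightarrow> int) ring"
    where R1: "field R1" "finite (carrier R1)" "card (carrier R1) = c + 1"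
    using finite_field_exists[OF assms(2)] by blast
  obtain R2 :: "((int list \<times> nat) multiset \<Rightarrow> int) ring"
    where R2: "field R2" "finite (carrier R2)" "card (carrier R2) = m"
    using finite_field_exists[OF assms(3)] by blast
  interpret R1: field R1 by (rule R1(1))
  interpret R2: field R2 by (rule R2(1))
  obtain W1 where W1: "W1 \<subseteq> words (carrier R1) (c + 2)" "card W1 = (c + 1) ^ 2"
    "agree_at_most_once W1" "replicate (c + 2) \<zero>\<^bsub>R1\<^esub> \<in> W1"
    using R1.exists_agree_at_most_once_words[OF R1(2), of "c + 1"] R1(3) by auto
  obtain W2 where W2: "W2 \<subseteq> words (carrier R2) (c + 2)" "card W2 = m ^ 2" "agree_at_most_once W2"
    using R2.exists_agree_at_most_once_words[OF R2(2), of "c + 1"] R2(3) assms(4) by auto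
  obtain C where "frameproof c {0..<c * m + 1} (c + 2) C" "card C = ((c + 1) ^ 2 - 1) * m ^ 2"
    using exists_frameproof_masked_product[OF W1(1,3,4) R1.zero_closed W2(1,3) R1(2) R2(2), of c]
      assms(1) R1(3) R2(3) W1(2) W2(2) by auto
  moreover have "real (((c + 1) ^ 2 - 1) * m ^ 2) = (real c + 2) / real c * (real (c * m + 1) - 1) ^ 2"
    using assms(1) by (simp add: power2_eq_square field_simps)
  ultimately show ?thesis by (intro exI[of _ "{0..<c * m + 1}"]) auto
qed

end
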